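(* Let $a,b\in(0,+\infty)$ satisfy $1<a-b$ and $a+b<2$. Let $\varepsilon$ satisfy $$0<\varepsilon<\min\left\{1;\ \frac{a-1-b}{224\,b}\right\}\quad\text{and}\quad \varepsilon<\frac{2-a-b}{224\,b}.$$ Define $\varphi:\mathbb{R}\to\mathbb{R}$ by $$\varphi(t)=\begin{cases}\frac{3}{2}\pi & \text{if } t\in(-\infty,1],\\ \frac{3}{2}\pi+\varepsilon\ln\ln\big(e+(t-1)^4\big) & \text{if } t\in(1,+\infty),\end{cases}$$ and define $g$ on $[0,+\infty)$ by $g(t)=t^{a+b\sin(\varphi(t))}$. Then $$g''(t)-\frac{g'(t)}{t}\le\{224b\varepsilon+a-2+b\}\frac{g'(t)}{t}<0\qquad\forall t>0,$$ so in particular $\frac{g''(t)\,t}{g'(t)}\le 1$ for all $t>0$; moreover the function $t\mapsto\frac{g'(t)}{t}$ is strictly decreasing on $(0,+\infty)$.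
   Context: Here $e$ is Euler's number and $\ln$ the natural logarithm. The function $g$ belongs to $C^1([0,+\infty))\cap C^2((0,+\infty))$ and satisfies $g'(t)>0$ for $t>0$, so the quantities above are well defined. *)

theory Defs
  imports "HOL-Analysis.Analysis"
begin

definition phi5 :: "real \<Rightarrow> real \<Rightarrow> real" where
  "phi5 \<epsilon> t = (if t \<le> 1 then 3/2 * pi
                  else 3/2 * pi + \<epsilon> * ln (ln (exp 1 + (t - 1)^4)))"

definition g5 :: "real \<Rightarrow> real \<Rightarrow> real \<Rightarrow> real \<Rightarrow> real" where
  "g5 a b \<epsilon> t = t powr (a + b * sin (phi5 \<epsilon> t))"

end

theory Submission
  imports Defs
begin

text \<open>
  Write \<open>g t = t powr P t\<close> with exponent \<open>P = a + b sin \<phi>\<close> and put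
  \<open>A = t g'/g = t ln t P' + P\<close>. Then \<open>t\<^sup>2 g''/g = A\<^sup>2 + F - P\<close> with
  \<open>F = t\<^sup>2 ln t P'' + 2 t P'\<close>, so the claimed inequality reads
  \<open>A\<^sup>2 + F - P - A \<le> K A\<close> with \<open>K = 224 b \<epsilon> + a - 2 + b\<close>.
  The phase \<open>\<phi>\<close> is constant up to \<open>t = 1\<close> and grows like \<open>\<epsilon> ln ln t\<close> afterwards, so
  \<open>t \<phi>'\<close>, \<open>t ln t \<phi>'\<close>, \<open>t\<^sup>2 ln t \<phi>'\<^sup>2\<close> and \<open>t\<^sup>2 ln t \<phi>''\<close> are \<open>O(\<epsilon>)\<close>.
  Hence \<open>A = P + O(b\<epsilon>)\<close> and \<open>F = O(b\<epsilon>)\<close>, with explicit constants 7 and 197,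
  and the inequality follows from \<open>a - b \<le> P \<le> a + b\<close>.
\<close>

definition quartic :: "real \<Rightarrow> real" where
  "quartic t = exp 1 + (t - 1)^4"

definition loglog :: "real \<Rightarrow> real" where
  "loglog t = ln (ln (quartic t))"

definition loglog' :: "real \<Rightarrow> real" where
  "loglog' t = 4 * (t - 1)^3 / (quartic t * ln (quartic t))"

definition loglog'' :: "real \<Rightarrow> real" where
  "loglog'' t = 12 * (t - 1)^2 / (quartic t * ln (quartic t))
     - 16 * (t - 1)^6 * (ln (quartic t) + 1) / (quartic t * ln (quartic t))^2"

lemma exp1_le_quartic: "exp 1 \<le> quartic t"
  by (simp add: quartic_def)

lemma one_less_quartic: "1 < quartic t"
  using exp1_le_quartic[of t] exp_gt_one[of 1] by linarith

lemma quartic_pos: "0 < quartic t"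
  using one_less_quartic[of t] by linarith

lemma one_le_ln_quartic: "1 \<le> ln (quartic t)"
  using exp1_le_quartic[of t] quartic_pos[of t] by (simp add: ln_ge_iff)

lemma loglog_at_1: "loglog 1 = 0" "loglog' 1 = 0" "loglog'' 1 = 0"
  by (simp_all add: loglog_def loglog'_def loglog''_def quartic_def)

lemma DERIV_quartic: "(quartic has_real_derivative 4 * (t - 1)^3) (at t)"
  unfolding quartic_def[abs_def] by (auto intro!: derivative_eq_intros)

lemma DERIV_loglog: "(loglog has_real_derivative loglog' t) (at t)"
  using one_less_quartic[of t] one_le_ln_quartic[of t] unfolding loglog_def[abs_def] loglog'_def
  by (auto intro!: derivative_eq_intros DERIV_quartic simp: field_simps)

lemma DERIV_loglog': "(loglog' has_real_derivative loglog'' t) (at t)"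
  using one_less_quartic[of t] one_le_ln_quartic[of t] unfolding loglog'_def[abs_def] loglog''_def
  by (auto intro!: derivative_eq_intros DERIV_quartic simp: field_simps power2_eq_square)

lemma le_quartic: "t \<le> quartic t"
proof -
  have "t - 1 \<le> 1 + (t - 1)^4"
  proof (cases "t - 1 \<le> 1")
    case True
    moreover have "0 \<le> (t - 1)^4" by simp
    ultimately show ?thesis by linarith
  next
    case False
    then have "(t - 1)^1 \<le> (t - 1)^4" by (intro power_increasing) auto
    then show ?thesis by simp
  qed
  moreover have "2 \<le> exp (1::real)" using exp_ge_add_one_self[of 1] by simp
  ultimately show ?thesis unfolding quartic_def by linarith
qed

lemma cube_le_fourth_power: "4 * x^3 \<le> 3 * x^4 + (1::real)"
proof -
  have "0 \<le> (x - 1)^2 * (2 * x^2 + (x + 1)^2)" by simp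
  then show ?thesis by (simp add: algebra_simps power2_eq_square power3_eq_cube power4_eq_xxxx)
qed

lemma square_le_fourth_power: "2 * x^2 \<le> x^4 + (1::real)"
proof -
  have "0 \<le> (x^2 - 1)^2" by simp
  then show ?thesis by (simp add: algebra_simps power2_eq_square power4_eq_xxxx)
qed

lemma quartic_bounds: "t * (t - 1)^3 \<le> 7/4 * quartic t" "t^2 * (t - 1)^2 \<le> 3 * quartic t"
proof -
  define x where "x = t - 1"
  have "quartic t = exp 1 + x^4" "1 \<le> exp (1::real)" by (simp_all add: quartic_def x_def)
  moreover have "t * (t - 1)^3 = x^4 + x^3" and "t^2 * (t - 1)^2 = x^4 + 2 * x^3 + x^2"
    by (simp_all add: x_def algebra_simps power2_eq_square power3_eq_cube power4_eq_xxxx)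
  moreover note cube_le_fourth_power[of x] square_le_fourth_power[of x]
  ultimately show "t * (t - 1)^3 \<le> 7/4 * quartic t" and "t^2 * (t - 1)^2 \<le> 3 * quartic t"
    by linarith+
qed

lemma loglog_derivative_bounds:
  assumes "1 < t"
  shows "\<bar>t * loglog' t\<bar> \<le> 7" "\<bar>t * ln t * loglog' t\<bar> \<le> 7"
    "\<bar>t^2 * ln t * (loglog' t)^2\<bar> \<le> 49" "\<bar>t^2 * ln t * loglog'' t\<bar> \<le> 134"
proof -
  define w where "w = quartic t"
  define l where "l = ln w"
  define Q where "Q = t * (t - 1)^3 / w"
  define R where "R = t^2 * (t - 1)^2 / w"
  define r where "r = 1 / l"
  define s where "s = ln t / l"
  have w: "0 < w" and l: "1 \<le> l"
    using quartic_pos one_le_ln_quartic unfolding w_def l_def by auto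
  have r: "0 < r" "r \<le> 1" using l unfolding r_def by auto
  have s: "0 \<le> s" "s \<le> 1"
    using assms l le_quartic[of t] quartic_pos[of t] unfolding s_def l_def w_def by auto
  have Q: "0 \<le> Q" "Q \<le> 7/4"
    using assms w quartic_bounds(1)[of t] unfolding Q_def w_def by (auto simp: divide_le_eq)
  have R: "0 \<le> R" "R \<le> 3"
    using w quartic_bounds(2)[of t] unfolding R_def w_def by (auto simp: divide_le_eq)
  have Q2: "Q^2 \<le> (7/4)^2" using Q by (intro power_mono) auto
  have eqs: "t * loglog' t = 4 * Q * r" "t * ln t * loglog' t = 4 * Q * s"
    "t^2 * ln t * (loglog' t)^2 = 16 * Q^2 * s * r"
    "t^2 * ln t * loglog'' t = s * (12 * R - 16 * Q^2 * (1 + r))"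
    unfolding loglog'_def loglog''_def Q_def R_def r_def s_def w_def[symmetric] l_def[symmetric]
    using w l by (simp_all add: field_simps power2_eq_square)
  have "4 * Q * r \<le> 4 * (7/4) * 1" "4 * Q * s \<le> 4 * (7/4) * 1"
    "16 * Q^2 * s * r \<le> 16 * (7/4)^2 * 1 * 1"
    using Q Q2 r s by (intro mult_mono; simp)+
  moreover have "\<bar>s * (12 * R - 16 * Q^2 * (1 + r))\<bar> \<le> 1 * 134"
  proof -
    have "Q^2 * (1 + r) \<le> (7/4)^2 * 2" using Q2 r by (intro mult_mono) auto
    moreover have "0 \<le> Q^2 * (1 + r)" using r by simp
    ultimately have "\<bar>12 * R - 16 * Q^2 * (1 + r)\<bar> \<le> 134"
      using R unfolding abs_le_iff by (simp add: power2_eq_square)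
    then show ?thesis unfolding abs_mult using s by (intro mult_mono) auto
  qed
  ultimately show "\<bar>t * loglog' t\<bar> \<le> 7" "\<bar>t * ln t * loglog' t\<bar> \<le> 7"
    "\<bar>t^2 * ln t * (loglog' t)^2\<bar> \<le> 49" "\<bar>t^2 * ln t * loglog'' t\<bar> \<le> 134"
    unfolding eqs using Q r s by (simp_all add: power2_eq_square)
qed

definition cutoff :: "real \<Rightarrow> (real \<Rightarrow> real) \<Rightarrow> real \<Rightarrow> real" where
  "cutoff c h t = (if t \<le> c then 0 else h t)"

lemma DERIV_cutoff:
  assumes "\<And>t. (h has_real_derivative h' t) (at t)" "h c = 0" "h' c = 0"
  shows "(cutoff c h has_real_derivative cutoff c h' t) (at t)"
proof -
  have "((\<lambda>t. if t \<in> {..c} then 0 else h t) has_vector_derivative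
          (if t \<in> {..c} then 0 else h' t)) (at t within UNIV)"
    by (rule has_vector_derivative_If_within_closures[where T="{c<..}"])
       (use assms in \<open>auto simp: has_real_derivative_iff_has_vector_derivative[symmetric]
                         intro: has_field_derivative_at_within\<close>)
  then show ?thesis
    unfolding cutoff_def[abs_def] has_real_derivative_iff_has_vector_derivative by simp
qed

definition phi5' :: "real \<Rightarrow> real \<Rightarrow> real" where
  "phi5' \<epsilon> = cutoff 1 (\<lambda>t. \<epsilon> * loglog' t)"

definition phi5'' :: "real \<Rightarrow> real \<Rightarrow> real" where
  "phi5'' \<epsilon> = cutoff 1 (\<lambda>t. \<epsilon> * loglog'' t)"

lemma phi5_eq_cutoff: "phi5 \<epsilon> = (\<lambda>t. 3/2 * pi + cutoff 1 (\<lambda>t. \<epsilon> * loglog t) t)"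
  by (auto simp: phi5_def cutoff_def loglog_def quartic_def)

lemma DERIV_phi5: "(phi5 \<epsilon> has_real_derivative phi5' \<epsilon> t) (at t)"
proof -
  have "(cutoff 1 (\<lambda>t. \<epsilon> * loglog t) has_real_derivative phi5' \<epsilon> t) (at t)"
    unfolding phi5'_def by (rule DERIV_cutoff) (auto intro: DERIV_cmult DERIV_loglog simp: loglog_at_1)
  from DERIV_add[OF DERIV_const this] show ?thesis by (simp add: phi5_eq_cutoff)
qed

lemma DERIV_phi5': "(phi5' \<epsilon> has_real_derivative phi5'' \<epsilon> t) (at t)"
  unfolding phi5'_def phi5''_def
  by (rule DERIV_cutoff) (auto intro: DERIV_cmult DERIV_loglog' simp: loglog_at_1)

lemma phi5_derivative_bounds:
  assumes "0 \<le> \<epsilon>" "\<epsilon> \<le> 1" "0 < t"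
  shows "\<bar>t * phi5' \<epsilon> t\<bar> \<le> 7 * \<epsilon>" "\<bar>t * ln t * phi5' \<epsilon> t\<bar> \<le> 7 * \<epsilon>"
    "\<bar>t^2 * ln t * (phi5' \<epsilon> t)^2\<bar> \<le> 49 * \<epsilon>" "\<bar>t^2 * ln t * phi5'' \<epsilon> t\<bar> \<le> 134 * \<epsilon>"
proof -
  have "\<bar>t * phi5' \<epsilon> t\<bar> \<le> 7 * \<epsilon> \<and> \<bar>t * ln t * phi5' \<epsilon> t\<bar> \<le> 7 * \<epsilon> \<and>
    \<bar>t^2 * ln t * (phi5' \<epsilon> t)^2\<bar> \<le> 49 * \<epsilon> \<and> \<bar>t^2 * ln t * phi5'' \<epsilon> t\<bar> \<le> 134 * \<epsilon>"
  proof (cases "t \<le> 1")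
    case True
    then show ?thesis using assms by (simp add: phi5'_def phi5''_def cutoff_def)
  next
    case False
    have "\<epsilon>^2 \<le> \<epsilon>" using assms(1,2) by (simp add: power2_eq_square mult_left_le)
    moreover have "\<epsilon> * \<bar>t * loglog' t\<bar> \<le> \<epsilon> * 7" "\<epsilon> * \<bar>t * ln t * loglog' t\<bar> \<le> \<epsilon> * 7"
      "\<epsilon>^2 * \<bar>t^2 * ln t * (loglog' t)^2\<bar> \<le> \<epsilon>^2 * 49"
      "\<epsilon> * \<bar>t^2 * ln t * loglog'' t\<bar> \<le> \<epsilon> * 134"
      using False assms loglog_derivative_bounds[of t] by (intro mult_left_mono; simp)+
    ultimately show ?thesis using False assms
      by (simp add: phi5'_def phi5''_def cutoff_def abs_mult algebra_simps)
  qed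
  then show "\<bar>t * phi5' \<epsilon> t\<bar> \<le> 7 * \<epsilon>" "\<bar>t * ln t * phi5' \<epsilon> t\<bar> \<le> 7 * \<epsilon>"
    "\<bar>t^2 * ln t * (phi5' \<epsilon> t)^2\<bar> \<le> 49 * \<epsilon>" "\<bar>t^2 * ln t * phi5'' \<epsilon> t\<bar> \<le> 134 * \<epsilon>"
    by auto
qed

lemma sin_exponent_bounds:
  fixes b x x' x'' t :: real
  assumes "0 \<le> b" "\<bar>t * x'\<bar> \<le> \<beta>" "\<bar>t * ln t * x'\<bar> \<le> \<alpha>"
    "\<bar>t^2 * ln t * x'^2\<bar> \<le> \<gamma>" "\<bar>t^2 * ln t * x''\<bar> \<le> \<delta>"
  shows "\<bar>t * ln t * (b * cos x * x')\<bar> \<le> b * \<alpha>"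
    "\<bar>t^2 * ln t * (b * (cos x * x'' - sin x * x'^2)) + 2 * t * (b * cos x * x')\<bar>
       \<le> b * (\<gamma> + \<delta> + 2 * \<beta>)"
proof -
  have cos_mult: "\<bar>cos x * y\<bar> \<le> \<bar>y\<bar>" and sin_mult: "\<bar>sin x * y\<bar> \<le> \<bar>y\<bar>" for y
    by (simp_all add: abs_mult mult_left_le_one_le)
  have "\<bar>t * ln t * (b * cos x * x')\<bar> = b * \<bar>cos x * (t * ln t * x')\<bar>"
    using assms(1) by (simp add: abs_mult ac_simps)
  also have "\<dots> \<le> b * \<alpha>"
    using assms(1,3) cos_mult[of "t * ln t * x'"] by (intro mult_left_mono) auto
  finally show "\<bar>t * ln t * (b * cos x * x')\<bar> \<le> b * \<alpha>" .
  have "t^2 * ln t * (b * (cos x * x'' - sin x * x'^2)) + 2 * t * (b * cos x * x')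
      = b * (cos x * (t^2 * ln t * x'') - sin x * (t^2 * ln t * x'^2) + 2 * (cos x * (t * x')))"
    by (simp add: algebra_simps)
  also have "\<bar>\<dots>\<bar> \<le> b * (\<gamma> + \<delta> + 2 * \<beta>)"
  proof -
    have "\<bar>cos x * (t^2 * ln t * x'')\<bar> \<le> \<delta>" "\<bar>sin x * (t^2 * ln t * x'^2)\<bar> \<le> \<gamma>"
      "\<bar>cos x * (t * x')\<bar> \<le> \<beta>"
      using assms cos_mult sin_mult order_trans by metis+
    then have "\<bar>cos x * (t^2 * ln t * x'') - sin x * (t^2 * ln t * x'^2) + 2 * (cos x * (t * x'))\<bar>
        \<le> \<gamma> + \<delta> + 2 * \<beta>"
      unfolding abs_le_iff by linarith
    then show ?thesis using assms(1) by (simp add: abs_mult mult_left_mono)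
  qed
  finally show "\<bar>t^2 * ln t * (b * (cos x * x'' - sin x * x'^2)) + 2 * t * (b * cos x * x')\<bar>
       \<le> b * (\<gamma> + \<delta> + 2 * \<beta>)" .
qed

lemma powr_exponent_derivatives:
  fixes P P' P'' :: "real \<Rightarrow> real"
  assumes P': "\<And>s. 0 < s \<Longrightarrow> (P has_real_derivative P' s) (at s)"
    and P'': "\<And>s. 0 < s \<Longrightarrow> (P' has_real_derivative P'' s) (at s)"
    and t: "0 < t"
  defines "g \<equiv> \<lambda>s. s powr P s"
  defines "A \<equiv> t * ln t * P' t + P t"
  shows "(g has_real_derivative deriv g t) (at t)"
    "(deriv g has_real_derivative deriv (deriv g) t) (at t)"
    "t * deriv g t = g t * A"
    "t^2 * deriv (deriv g) t = g t * (A^2 + t^2 * ln t * P'' t + 2 * t * P' t - P t)"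
proof -
  define q where "q s = P' s * ln s + P s / s" for s
  have dg: "(g has_real_derivative g s * q s) (at s)" if "0 < s" for s
    using DERIV_powr[OF DERIV_ident that P'[OF that]] that unfolding g_def q_def by simp
  then have deriv_g: "deriv g s = g s * q s" if "0 < s" for s
    using that by (simp add: DERIV_imp_deriv)
  show "(g has_real_derivative deriv g t) (at t)" using dg[OF t] deriv_g[OF t] by simp
  show "t * deriv g t = g t * A" unfolding deriv_g[OF t] q_def A_def using t by (simp add: field_simps)
  have "((\<lambda>s. g s * q s) has_real_derivative
      g t * (q t^2 + P'' t * ln t + 2 * P' t / t - P t / t^2)) (at t)"
    using t dg[OF t] P'[OF t] P''[OF t]
    by (auto intro!: derivative_eq_intros simp: q_def field_simps power2_eq_square)
  then have ddg: "(deriv g has_real_derivative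
      g t * (q t^2 + P'' t * ln t + 2 * P' t / t - P t / t^2)) (at t)"
    by (rule has_field_derivative_transform_within_open[where S="{0<..}"]) (use t deriv_g in auto)
  then show "(deriv g has_real_derivative deriv (deriv g) t) (at t)"
    by (simp add: DERIV_imp_deriv)
  show "t^2 * deriv (deriv g) t = g t * (A^2 + t^2 * ln t * P'' t + 2 * t * P' t - P t)"
    unfolding DERIV_imp_deriv[OF ddg] q_def A_def using t by (simp add: field_simps power2_eq_square)
qed

lemma powr_exponent_derivative_estimate:
  fixes P P' P'' :: "real \<Rightarrow> real"
  assumes P': "\<And>s. 0 < s \<Longrightarrow> (P has_real_derivative P' s) (at s)"
    and P'': "\<And>s. 0 < s \<Longrightarrow> (P' has_real_derivative P'' s) (at s)"
    and t: "0 < t"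
  defines "g \<equiv> \<lambda>s. s powr P s"
  defines "A \<equiv> t * ln t * P' t + P t"
  assumes "0 < A" and quadratic: "A^2 + t^2 * ln t * P'' t + 2 * t * P' t - P t - A \<le> K * A"
  shows "0 < deriv g t" "deriv (deriv g) t - deriv g t / t \<le> K * (deriv g t / t)"
proof -
  have gt: "g t = t powr P t" by (simp add: g_def)
  note D = powr_exponent_derivatives[OF P' P'' t, folded g_def A_def gt]
  have "0 < g t" using t by (simp add: gt)
  with D(3) \<open>0 < A\<close> have "0 < t * deriv g t" by simp
  then show "0 < deriv g t" using t by (simp add: zero_less_mult_iff)
  have "t^2 * (deriv (deriv g) t - deriv g t / t) = t^2 * deriv (deriv g) t - t * deriv g t"
    using t by (simp add: power2_eq_square field_simps)
  also have "\<dots> = g t * (A^2 + t^2 * ln t * P'' t + 2 * t * P' t - P t - A)"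
    using D(3,4) by (simp add: algebra_simps)
  also have "\<dots> \<le> g t * (K * A)"
    using \<open>0 < g t\<close> quadratic by (simp add: mult_left_mono)
  also have "\<dots> = t^2 * (K * (deriv g t / t))"
    using D(3) t by (simp add: power2_eq_square)
  finally show "deriv (deriv g) t - deriv g t / t \<le> K * (deriv g t / t)"
    by (rule mult_left_le_imp_le) (use t in simp)
qed

lemma exponent_quadratic_inequality:
  fixes a b c \<delta> \<eta> P d F :: real
  assumes "a - b \<le> P" "P \<le> a + b" "\<bar>d\<bar> \<le> \<delta>" "\<bar>F\<bar> \<le> \<eta>" "1 + \<delta> \<le> a - b" "2 * \<delta> + \<eta> \<le> c"
  shows "1 \<le> P + d" "(P + d)^2 + F - P - (P + d) \<le> (c + a - 2 + b) * (P + d)"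
proof -
  define A where "A = P + d"
  show A: "1 \<le> P + d" using assms by (simp add: abs_le_iff)
  have "A * (P - a - b) \<le> 0" using A assms(2) unfolding A_def by (intro mult_nonneg_nonpos) auto
  moreover have "(A - 1) * (d - c) \<le> 0" 
    using A assms(3-6) unfolding A_def by (intro mult_nonneg_nonpos) (auto simp: abs_le_iff)
  moreover have "A^2 + F - P - A - (c + a - 2 + b) * A = A * (P - a - b) + (A - 1) * (d - c) + 2 * d - c + F"
    unfolding A_def by (simp add: algebra_simps power2_eq_square)
  ultimately show "(P + d)^2 + F - P - (P + d) \<le> (c + a - 2 + b) * (P + d)"
    using assms(3-6) unfolding A_def abs_le_iff by linarith
qed

lemma quotient_by_id_strictly_decreasing:
  fixes f f' :: "real \<Rightarrow> real"
  assumes "\<And>t. 0 < t \<Longrightarrow> (f has_real_derivative f' t) (at t)" "\<And>t. 0 < t \<Longrightarrow> f' t < f t / t"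
    and "0 < s" "s < t"
  shows "f t / t < f s / s"
proof (rule DERIV_neg_imp_decreasing[OF \<open>s < t\<close>])
  fix x assume "s \<le> x" "x \<le> t"
  then have x: "0 < x" using \<open>0 < s\<close> by linarith
  have "((\<lambda>x. f x / x) has_real_derivative (f' x * x - f x) / x^2) (at x)"
    using x assms(1)[OF x] by (auto intro!: derivative_eq_intros simp: power2_eq_square)
  moreover have "(f' x * x - f x) / x^2 < 0"
    using assms(2)[OF x] x by (simp add: divide_neg_pos less_divide_eq)
  ultimately show "\<exists>y. ((\<lambda>x. f x / x) has_real_derivative y) (at x) \<and> y < 0" by blast
qed

lemma g5_derivative_estimate:
  fixes a b \<epsilon> t :: real
  assumes "0 < b" "0 < \<epsilon>" "\<epsilon> \<le> 1" "1 + 7 * b * \<epsilon> \<le> a - b" and t: "0 < t"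
  defines "g \<equiv> g5 a b \<epsilon>"
  shows "(g has_real_derivative deriv g t) (at t)"
    "(deriv g has_real_derivative deriv (deriv g) t) (at t)"
    "0 < deriv g t"
    "deriv (deriv g) t - deriv g t / t \<le> (224 * b * \<epsilon> + a - 2 + b) * (deriv g t / t)"
proof -
  define P where "P s = a + b * sin (phi5 \<epsilon> s)" for s
  define P' where "P' s = b * cos (phi5 \<epsilon> s) * phi5' \<epsilon> s" for s
  define P'' where
    "P'' s = b * (cos (phi5 \<epsilon> s) * phi5'' \<epsilon> s - sin (phi5 \<epsilon> s) * (phi5' \<epsilon> s)^2)" for s
  have g: "g = (\<lambda>s. s powr P s)" unfolding g_def g5_def P_def ..
  have dP: "(P has_real_derivative P' s) (at s)" for s
    unfolding P_def[abs_def] P'_def by (auto intro!: derivative_eq_intros DERIV_phi5)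
  have dP': "(P' has_real_derivative P'' s) (at s)" for s
    unfolding P'_def[abs_def] P''_def
    by (auto intro!: derivative_eq_intros DERIV_phi5 DERIV_phi5' simp: algebra_simps power2_eq_square)
  show "(g has_real_derivative deriv g t) (at t)"
    "(deriv g has_real_derivative deriv (deriv g) t) (at t)"
    using powr_exponent_derivatives(1,2)[OF dP dP' t] unfolding g .
  define A where "A = t * ln t * P' t + P t"
  define F where "F = t^2 * ln t * P'' t + 2 * t * P' t"
  have "\<bar>b * sin (phi5 \<epsilon> t)\<bar> \<le> b" using \<open>0 < b\<close> by (simp add: abs_mult mult_left_le)
  then have P: "a - b \<le> P t" "P t \<le> a + b" by (auto simp: P_def abs_le_iff)
  have d: "\<bar>t * ln t * P' t\<bar> \<le> 7 * b * \<epsilon>" and F: "\<bar>F\<bar> \<le> 197 * b * \<epsilon>"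
    using sin_exponent_bounds[where x="phi5 \<epsilon> t", OF less_imp_le[OF \<open>0 < b\<close>]
        phi5_derivative_bounds[OF less_imp_le[OF \<open>0 < \<epsilon>\<close>] \<open>\<epsilon> \<le> 1\<close> t]]
    unfolding P'_def P''_def F_def by (simp_all add: algebra_simps)
  have "2 * (7 * b * \<epsilon>) + 197 * b * \<epsilon> \<le> 224 * b * \<epsilon>" using assms(1,2) by simp
  note exponent_quadratic_inequality[OF P d F assms(4) this]
  then have pos: "0 < A" and quadratic: "A^2 + F - P t - A \<le> (224 * b * \<epsilon> + a - 2 + b) * A"
    unfolding A_def by (simp_all add: add.commute)
  from quadratic have "A^2 + t^2 * ln t * P'' t + 2 * t * P' t - P t - A
      \<le> (224 * b * \<epsilon> + a - 2 + b) * A"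
    by (simp add: F_def algebra_simps)
  from powr_exponent_derivative_estimate[OF dP dP' t pos[unfolded A_def] this[unfolded A_def]]
  show "0 < deriv g t"
    "deriv (deriv g) t - deriv g t / t \<le> (224 * b * \<epsilon> + a - 2 + b) * (deriv g t / t)"
    unfolding g .
qed

theorem theorem5p1:
  fixes a b \<epsilon> :: real
  assumes "a > 0" "b > 0" "1 < a - b" "a + b < 2"
    and "0 < \<epsilon>" "\<epsilon> < 1" "\<epsilon> < (a - 1 - b) / (224 * b)"
    and "\<epsilon> < (2 - a - b) / (224 * b)"
  defines "g \<equiv> g5 a b \<epsilon>"
  shows "(\<forall>t>0. (g has_real_derivative deriv g t) (at t)
              \<and> (deriv g has_real_derivative deriv (deriv g) t) (at t)
              \<and> deriv g t > 0)
       \<and> (\<forall>t>0. deriv (deriv g) t - deriv g t / t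
                 \<le> (224 * b * \<epsilon> + a - 2 + b) * (deriv g t / t)
              \<and> (224 * b * \<epsilon> + a - 2 + b) * (deriv g t / t) < 0)
       \<and> (\<forall>t>0. deriv (deriv g) t * t / deriv g t \<le> 1)
       \<and> (\<forall>s t. 0 < s \<and> s < t \<longrightarrow> deriv g t / t < deriv g s / s)"
proof -
  have "224 * b * \<epsilon> < a - 1 - b" and K: "224 * b * \<epsilon> + a - 2 + b < 0"
    using assms(2,7,8) by (simp_all add: less_divide_eq mult.commute)
  moreover have "0 < b * \<epsilon>" using assms(2,5) by simp
  ultimately have "1 + 7 * b * \<epsilon> \<le> a - b" by linarith
  note estimate = g5_derivative_estimate[OF assms(2,5) less_imp_le[OF assms(6)] this, folded g_def]
  have negative: "(224 * b * \<epsilon> + a - 2 + b) * (deriv g t / t) < 0" if "0 < t" for t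
    by (rule mult_neg_pos[OF K divide_pos_pos[OF estimate(3)[OF that] that]])
  have concave: "deriv (deriv g) t < deriv g t / t" if "0 < t" for t
    using estimate(4)[OF that] negative[OF that] by linarith
  have "deriv (deriv g) t * t / deriv g t \<le> 1" if "0 < t" for t
    using concave[OF that] estimate(3)[OF that] that by (simp add: less_divide_eq divide_le_eq)
  moreover note quotient_by_id_strictly_decreasing[OF estimate(2) concave]
  ultimately show ?thesis
    using estimate(1,2,3,4) negative by (intro conjI allI impI) auto
qed

end
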